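(* Let $n\ge1$, $a\in\mathcal{IS}_n$, and consider the semigroup $(\mathcal{IS}_n,*_a)$. Let $x\in\mathcal{IS}_n$. If $\operatorname{ran}(x)\subseteq\operatorname{dom}(a)$ and $\operatorname{dom}(x)\subseteq\operatorname{ran}(a)$, then the $\mathcal{H}$-class of $x$ is $$H_x=\{y\in\mathcal{IS}_n : \operatorname{dom}(y)=\operatorname{dom}(x),\ \operatorname{ran}(y)=\operatorname{ran}(x)\};$$ otherwise $H_x=\{x\}$.
   Context: $\mathcal{IS}_n$ is the set of all partial injective maps of $N=\{1,\dots,n\}$, including the empty map; $\operatorname{dom}(x)$, $\operatorname{ran}(x)$ denote domain and range. Maps are composed from left to right: $(xy)(i)=y(x(i))$, defined exactly when $i\in\operatorname{dom}(x)$ and $x(i)\in\operatorname{dom}(y)$. For fixed $a\in\mathcal{IS}_n$, $x*_a y:=xay$. Green's relations in a semigroup $S$: with $S^1$ the semigroup $S$ with an identity adjoined, $x\mathcal{L}y$ iff $S^1x=S^1y$, $x\mathcal{R}y$ iff $xS^1=yS^1$, $\mathcal{H}=\mathcal{L}\cap\mathcal{R}$, $\mathcal{D}=\mathcal{L}\circ\mathcal{R}$ (which equals $\mathcal{R}\circ\mathcal{L}$). $L_x,R_x,H_x,D_x$ denote the corresponding classes of $x$, here computed in $(\mathcal{IS}_n,*_a)$. *)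

theory Defs
  imports Main
begin

text \<open>Partial maps of N = {1..n} are represented as maps nat \<rightharpoonup> nat.
  A partial injective map of N is a map whose domain and range lie in {1..n}
  and which is injective on its domain.\<close>

definition IS :: "nat \<Rightarrow> (nat \<rightharpoonup> nat) set" where
  "IS n = {x. dom x \<subseteq> {1..n} \<and> ran x \<subseteq> {1..n} \<and> inj_on x (dom x)}"

text \<open>Left-to-right composition: (x ;; y) i = y (x i).\<close>
definition pcomp :: "(nat \<rightharpoonup> nat) \<Rightarrow> (nat \<rightharpoonup> nat) \<Rightarrow> (nat \<rightharpoonup> nat)" (infixl ";;" 70) where
  "x ;; y = y \<circ>\<^sub>m x"

definition sand :: "(nat \<rightharpoonup> nat) \<Rightarrow> (nat \<rightharpoonup> nat) \<Rightarrow> (nat \<rightharpoonup> nat) \<Rightarrow> (nat \<rightharpoonup> nat)" where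
  "sand a x y = x ;; a ;; y"

text \<open>Principal ideals in the semigroup (IS n, *_a) with identity adjoined:
  S^1 x = S x \<union> {x}, x S^1 = x S \<union> {x}.\<close>
definition left_ideal1 :: "nat \<Rightarrow> (nat \<rightharpoonup> nat) \<Rightarrow> (nat \<rightharpoonup> nat) \<Rightarrow> (nat \<rightharpoonup> nat) set" where
  "left_ideal1 n a x = {sand a s x | s. s \<in> IS n} \<union> {x}"

definition right_ideal1 :: "nat \<Rightarrow> (nat \<rightharpoonup> nat) \<Rightarrow> (nat \<rightharpoonup> nat) \<Rightarrow> (nat \<rightharpoonup> nat) set" where
  "right_ideal1 n a x = {sand a x s | s. s \<in> IS n} \<union> {x}"

definition GreenL :: "nat \<Rightarrow> (nat \<rightharpoonup> nat) \<Rightarrow> (nat \<rightharpoonup> nat) \<Rightarrow> (nat \<rightharpoonup> nat) \<Rightarrow> bool" where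
  "GreenL n a x y \<longleftrightarrow> left_ideal1 n a x = left_ideal1 n a y"

definition GreenR :: "nat \<Rightarrow> (nat \<rightharpoonup> nat) \<Rightarrow> (nat \<rightharpoonup> nat) \<Rightarrow> (nat \<rightharpoonup> nat) \<Rightarrow> bool" where
  "GreenR n a x y \<longleftrightarrow> right_ideal1 n a x = right_ideal1 n a y"

definition GreenH :: "nat \<Rightarrow> (nat \<rightharpoonup> nat) \<Rightarrow> (nat \<rightharpoonup> nat) \<Rightarrow> (nat \<rightharpoonup> nat) \<Rightarrow> bool" where
  "GreenH n a x y \<longleftrightarrow> GreenL n a x y \<and> GreenR n a x y"

definition Hclass :: "nat \<Rightarrow> (nat \<rightharpoonup> nat) \<Rightarrow> (nat \<rightharpoonup> nat) \<Rightarrow> (nat \<rightharpoonup> nat) set" where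
  "Hclass n a x = {y \<in> IS n. GreenH n a x y}"

end

theory Submission
  imports Defs
begin

text \<open>In \<open>(IS n, *\<^sub>a)\<close> the principal right ideal \<open>x S\<^sup>1\<close> consists of \<open>x\<close> together with all
  \<open>z\<close> with \<open>dom z \<subseteq> dom (x a)\<close>, since every such \<open>z\<close> factors as \<open>x a s\<close> through the partial
  inverse of \<open>x a\<close>; dually \<open>S\<^sup>1 x\<close> is \<open>x\<close> together with all \<open>z\<close> with \<open>ran z \<subseteq> ran (a x)\<close>.
  As \<open>dom (x a) \<subseteq> dom x\<close>, two distinct elements generate the same right ideal exactly when
  both satisfy \<open>dom (x a) = dom x\<close>, i.e. \<open>ran x \<subseteq> dom a\<close>, and have equal domains; dually for
  left ideals with \<open>ran (a x) = ran x\<close>, i.e. \<open>dom x \<subseteq> ran a\<close>.\<close>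

lemma inj_on_dom_Some_eq:
  assumes "inj_on f (dom f)" and "f i = Some k" and "f j = Some k"
  shows "i = j"
  using assms by (metis domI inj_on_contraD)

definition map_inv :: "('a \<rightharpoonup> 'b) \<Rightarrow> ('b \<rightharpoonup> 'a)" where
  "map_inv f j = (if j \<in> ran f then Some (THE i. f i = Some j) else None)"

lemma map_inv_Some_iff:
  assumes "inj_on f (dom f)"
  shows "map_inv f j = Some i \<longleftrightarrow> f i = Some j"
proof -
  have "(THE i. f i = Some j) = i" if "f i = Some j" for i
    using that assms by (blast intro: the_equality inj_on_dom_Some_eq)
  then show ?thesis
    by (auto simp: map_inv_def ran_def)
qed

lemma pcomp_Some_iff: "(x ;; y) i = Some k \<longleftrightarrow> (\<exists>j. x i = Some j \<and> y j = Some k)"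
  by (auto simp: pcomp_def map_comp_Some_iff)

lemma pcomp_assoc: "x ;; y ;; z = x ;; (y ;; z)"
  by (rule ext) (simp add: pcomp_def map_comp_def split: option.split)

lemma dom_pcomp_subset: "dom (x ;; y) \<subseteq> dom x"
  by (auto simp: pcomp_Some_iff)

lemma ran_pcomp_subset: "ran (x ;; y) \<subseteq> ran y"
  by (auto simp: ran_def pcomp_Some_iff)

lemma dom_pcomp_eq_iff: "dom (x ;; y) = dom x \<longleftrightarrow> ran x \<subseteq> dom y"
proof
  assume "dom (x ;; y) = dom x"
  then show "ran x \<subseteq> dom y"
    by (force simp: ran_def pcomp_Some_iff)
next
  assume "ran x \<subseteq> dom y"
  then have "dom x \<subseteq> dom (x ;; y)"
    by (force simp: ran_def pcomp_Some_iff)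
  then show "dom (x ;; y) = dom x"
    using dom_pcomp_subset by blast
qed

lemma ran_pcomp_eq_iff:
  assumes "inj_on y (dom y)"
  shows "ran (x ;; y) = ran y \<longleftrightarrow> dom y \<subseteq> ran x"
proof
  assume "ran (x ;; y) = ran y"
  then show "dom y \<subseteq> ran x"
    using assms by (force simp: ran_def pcomp_Some_iff dest: inj_on_dom_Some_eq)
next
  assume "dom y \<subseteq> ran x"
  then have "ran y \<subseteq> ran (x ;; y)"
    by (force simp: ran_def pcomp_Some_iff)
  then show "ran (x ;; y) = ran y"
    using ran_pcomp_subset by blast
qed

lemma IS_pcomp:
  assumes "x \<in> IS n" and "y \<in> IS n"
  shows "x ;; y \<in> IS n"
proof -
  have "inj_on (x ;; y) (dom (x ;; y))"
  proof (rule inj_onI)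
    fix i i'
    assume "i \<in> dom (x ;; y)" and "(x ;; y) i = (x ;; y) i'"
    then obtain k where "(x ;; y) i = Some k" "(x ;; y) i' = Some k"
      by (metis domD)
    then obtain j j' where "x i = Some j" "y j = Some k" "x i' = Some j'" "y j' = Some k"
      by (auto simp: pcomp_Some_iff)
    with assms show "i = i'"
      unfolding IS_def by (blast dest: inj_on_dom_Some_eq)
  qed
  then show ?thesis
    using assms dom_pcomp_subset[of x y] ran_pcomp_subset[of x y] by (auto simp: IS_def)
qed

lemma IS_map_inv:
  assumes "f \<in> IS n"
  shows "map_inv f \<in> IS n"
proof -
  have inj: "inj_on f (dom f)"
    using assms by (simp add: IS_def)
  then have "dom (map_inv f) = ran f" "ran (map_inv f) = dom f"
    by (auto simp: ran_def map_inv_Some_iff)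
  moreover have "inj_on (map_inv f) (dom (map_inv f))"
  proof (rule inj_onI)
    fix j j'
    assume "j \<in> dom (map_inv f)" and "map_inv f j = map_inv f j'"
    then obtain i where "map_inv f j = Some i" "map_inv f j' = Some i"
      by (metis domD)
    with inj show "j = j'"
      by (simp add: map_inv_Some_iff)
  qed
  ultimately show ?thesis
    using assms by (simp add: IS_def)
qed

lemma pcomp_map_inv_cancel_left:
  assumes "inj_on f (dom f)" and "dom g \<subseteq> dom f"
  shows "f ;; (map_inv f ;; g) = g"
proof
  fix i
  show "(f ;; (map_inv f ;; g)) i = g i"
  proof (cases "f i")
    case None
    with assms(2) have "g i = None"
      by blast
    with None show ?thesis
      by (simp add: pcomp_def)
  qed (use assms(1) in \<open>simp add: pcomp_def map_inv_Some_iff\<close>)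
qed

lemma pcomp_map_inv_cancel_right:
  assumes "inj_on f (dom f)" and "ran g \<subseteq> ran f"
  shows "g ;; map_inv f ;; f = g"
proof
  fix i
  show "(g ;; map_inv f ;; f) i = g i"
  proof (cases "g i")
    case (Some j)
    with assms obtain k where "f k = Some j"
      by (auto simp: ran_def)
    with Some assms(1) show ?thesis
      by (simp add: pcomp_def map_inv_Some_iff[symmetric])
  qed (simp add: pcomp_def)
qed

lemma right_ideal1_eq:
  assumes "a \<in> IS n" and "x \<in> IS n"
  shows "right_ideal1 n a x = insert x {z \<in> IS n. dom z \<subseteq> dom (x ;; a)}"
proof -
  have xa: "x ;; a \<in> IS n"
    using assms by (simp add: IS_pcomp)
  have "z \<in> {sand a x s | s. s \<in> IS n}" if "z \<in> IS n" "dom z \<subseteq> dom (x ;; a)" for z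
  proof -
    have "z = sand a x (map_inv (x ;; a) ;; z)"
      using xa that by (simp add: IS_def sand_def pcomp_map_inv_cancel_left)
    moreover have "map_inv (x ;; a) ;; z \<in> IS n"
      using xa that by (simp add: IS_pcomp IS_map_inv)
    ultimately show ?thesis
      by blast
  qed
  moreover have "sand a x s \<in> IS n \<and> dom (sand a x s) \<subseteq> dom (x ;; a)" if "s \<in> IS n" for s
    using xa that by (simp add: sand_def IS_pcomp dom_pcomp_subset)
  ultimately show ?thesis
    unfolding right_ideal1_def by blast
qed

lemma left_ideal1_eq:
  assumes "a \<in> IS n" and "x \<in> IS n"
  shows "left_ideal1 n a x = insert x {z \<in> IS n. ran z \<subseteq> ran (a ;; x)}"
proof -
  have ax: "a ;; x \<in> IS n"
    using assms by (simp add: IS_pcomp)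
  have "z \<in> {sand a s x | s. s \<in> IS n}" if "z \<in> IS n" "ran z \<subseteq> ran (a ;; x)" for z
  proof -
    have "z = sand a (z ;; map_inv (a ;; x)) x"
      using ax that pcomp_map_inv_cancel_right[of "a ;; x" z]
      by (simp add: IS_def sand_def pcomp_assoc)
    moreover have "z ;; map_inv (a ;; x) \<in> IS n"
      using ax that by (simp add: IS_pcomp IS_map_inv)
    ultimately show ?thesis
      by blast
  qed
  moreover have "sand a s x \<in> IS n \<and> ran (sand a s x) \<subseteq> ran (a ;; x)" if "s \<in> IS n" for s
    using assms that by (simp add: sand_def pcomp_assoc IS_pcomp ran_pcomp_subset)
  ultimately show ?thesis
    unfolding left_ideal1_def by blast
qed

lemma insert_sublevel_eq_iff:
  assumes "x \<in> S" and "y \<in> S" and "B x \<subseteq> \<phi> x" and "B y \<subseteq> \<phi> y"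
  shows "insert x {z \<in> S. \<phi> z \<subseteq> B x} = insert y {z \<in> S. \<phi> z \<subseteq> B y}
           \<longleftrightarrow> x = y \<or> (B x = \<phi> x \<and> B y = \<phi> y \<and> \<phi> x = \<phi> y)"
proof
  assume eq: "insert x {z \<in> S. \<phi> z \<subseteq> B x} = insert y {z \<in> S. \<phi> z \<subseteq> B y}"
  show "x = y \<or> (B x = \<phi> x \<and> B y = \<phi> y \<and> \<phi> x = \<phi> y)"
  proof (cases "x = y")
    case False
    have "y \<in> insert x {z \<in> S. \<phi> z \<subseteq> B x}" "x \<in> insert y {z \<in> S. \<phi> z \<subseteq> B y}"
      using eq by blast+
    with False have "\<phi> y \<subseteq> B x" "\<phi> x \<subseteq> B y"
      by blast+
    with assms(3,4) show ?thesis
      by blast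
  qed simp
next
  assume "x = y \<or> (B x = \<phi> x \<and> B y = \<phi> y \<and> \<phi> x = \<phi> y)"
  then show "insert x {z \<in> S. \<phi> z \<subseteq> B x} = insert y {z \<in> S. \<phi> z \<subseteq> B y}"
    using assms(1,2) by auto
qed

lemma GreenR_iff:
  assumes "a \<in> IS n" and "x \<in> IS n" and "y \<in> IS n"
  shows "GreenR n a x y \<longleftrightarrow> x = y \<or> (ran x \<subseteq> dom a \<and> ran y \<subseteq> dom a \<and> dom x = dom y)"
proof -
  have "GreenR n a x y \<longleftrightarrow>
      x = y \<or> (dom (x ;; a) = dom x \<and> dom (y ;; a) = dom y \<and> dom x = dom y)"
    unfolding GreenR_def right_ideal1_eq[OF assms(1,2)] right_ideal1_eq[OF assms(1,3)]
    by (rule insert_sublevel_eq_iff[where B = "\<lambda>x. dom (x ;; a)"])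
      (use assms in \<open>simp_all add: dom_pcomp_subset\<close>)
  then show ?thesis
    by (simp only: dom_pcomp_eq_iff)
qed

lemma GreenL_iff:
  assumes "a \<in> IS n" and "x \<in> IS n" and "y \<in> IS n"
  shows "GreenL n a x y \<longleftrightarrow> x = y \<or> (dom x \<subseteq> ran a \<and> dom y \<subseteq> ran a \<and> ran x = ran y)"
proof -
  have "GreenL n a x y \<longleftrightarrow>
      x = y \<or> (ran (a ;; x) = ran x \<and> ran (a ;; y) = ran y \<and> ran x = ran y)"
    unfolding GreenL_def left_ideal1_eq[OF assms(1,2)] left_ideal1_eq[OF assms(1,3)]
    by (rule insert_sublevel_eq_iff[where B = "\<lambda>x. ran (a ;; x)"])
      (use assms in \<open>simp_all add: ran_pcomp_subset\<close>)
  moreover have "inj_on x (dom x)" "inj_on y (dom y)"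
    using assms by (simp_all add: IS_def)
  ultimately show ?thesis
    by (simp only: ran_pcomp_eq_iff)
qed

lemma GreenH_iff:
  assumes "a \<in> IS n" and "x \<in> IS n" and "y \<in> IS n"
  shows "GreenH n a x y \<longleftrightarrow>
           y = x \<or> (ran x \<subseteq> dom a \<and> dom x \<subseteq> ran a \<and> dom y = dom x \<and> ran y = ran x)"
  unfolding GreenH_def GreenL_iff[OF assms] GreenR_iff[OF assms] by metis

theorem theorem4:
  fixes n :: nat and a x :: "nat \<rightharpoonup> nat"
  assumes "n \<ge> 1" and "a \<in> IS n" and "x \<in> IS n"
  shows "Hclass n a x =
           (if ran x \<subseteq> dom a \<and> dom x \<subseteq> ran a
            then {y \<in> IS n. dom y = dom x \<and> ran y = ran x}
            else {x})"
proof -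
  have "y \<in> Hclass n a x \<longleftrightarrow> y \<in> IS n \<and>
          (y = x \<or> (ran x \<subseteq> dom a \<and> dom x \<subseteq> ran a \<and> dom y = dom x \<and> ran y = ran x))" for y
    unfolding Hclass_def mem_Collect_eq using GreenH_iff[OF assms(2,3)] by blast
  with assms(3) show ?thesis
    by (simp add: set_eq_iff) blast
qed

end
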